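(* Let $d\ge2$, let $Af(x)=\int_{S^{d-1}}f(x-y)\,d\sigma(y)$ with $\sigma$ surface measure on the unit sphere, and $\Lambda_G(f,g,h)=\int_{\mathbb R^d}Af(x)Ag(x)h(x)\,dx$. If $\Lambda_G(f,g,h)\le C\|f\|_{L^{p_1}(\mathbb R^d)}\|g\|_{L^{p_2}(\mathbb R^d)}\|h\|_{L^{p_3}(\mathbb R^d)}$ for all nonnegative measurable $f,g,h$, then (1) $\frac1{p_1}+\frac1{p_2}+\frac1{p_3}\ge1$; (2) $\frac1{p_1}+\frac1{p_2}+\frac d{p_3}\le d$; (3) $\frac d{p_1}+\frac d{p_2}+\frac1{p_3}\le2d-1$; (4) $\frac d{p_1}+\frac1{p_3}\le d$; (5) $\frac d{p_2}+\frac1{p_3}\le d$. *)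

theory Defs
  imports "HOL-Analysis.Analysis" "HOL-Probability.Essential_Supremum"
begin

text \<open>Surface measure on the unit sphere S^{d-1} of R^d (here R^d = real^'n, d = CARD('n)),
  realised as the cone measure: sigma(E) = d * Lebesgue measure of the cone
  {t y | 0 < t <= 1, y in E}, i.e. the push-forward of Lebesgue measure on the unit ball
  under y |-> y / |y|, scaled by d.  For the round sphere this coincides with the
  (d-1)-dimensional Hausdorff / surface measure.\<close>
definition sphere_surface :: "(real ^ 'n::finite) measure" where
  "sphere_surface = scale_measure (of_nat CARD('n))
     (distr (restrict_space lborel (cball 0 1)) borel (\<lambda>y. y /\<^sub>R norm y))"

definition sph_avg :: "(real ^ 'n::finite \<Rightarrow> real) \<Rightarrow> real ^ 'n \<Rightarrow> ennreal" where
  "sph_avg f x = (\<integral>\<^sup>+ y. ennreal (f (x - y)) \<partial>sphere_surface)"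

definition LambdaG :: "(real ^ 'n::finite \<Rightarrow> real) \<Rightarrow> (real ^ 'n \<Rightarrow> real) \<Rightarrow> (real ^ 'n \<Rightarrow> real) \<Rightarrow> ennreal" where
  "LambdaG f g h = (\<integral>\<^sup>+ x. sph_avg f x * sph_avg g x * ennreal (h x) \<partial>lborel)"

definition Lp_norm :: "ennreal \<Rightarrow> (real ^ 'n::finite \<Rightarrow> real) \<Rightarrow> ennreal" where
  "Lp_norm p f =
     (if p = \<infinity> then esssup lborel (\<lambda>x. ennreal \<bar>f x\<bar>)
      else (let I = (\<integral>\<^sup>+ x. ennreal (\<bar>f x\<bar> powr enn2real p) \<partial>lborel)
            in if I = \<infinity> then \<infinity> else ennreal (enn2real I powr (1 / enn2real p))))"

end

theory Submission
  imports Defs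
begin

text \<open>Test the inequality on indicator functions. If \<open>A 1\<^sub>F \<ge> a\<close> and \<open>A 1\<^sub>G \<ge> b\<close> on \<open>H\<close>, then
  \<open>a b |H| \<le> \<Lambda>\<^sub>G(1\<^sub>F, 1\<^sub>G, 1\<^sub>H) \<le> C |F|\<^bsup>1/p\<^sub>1\<^esup> |G|\<^bsup>1/p\<^sub>2\<^esup> |H|\<^bsup>1/p\<^sub>3\<^esup>\<close>. Along one-parameter families of sets
  whose measures and averages are powers of a scale \<open>\<delta>\<close>, letting \<open>\<delta> \<rightarrow> 0\<close> turns this into an
  inequality between exponents. Five families give the five conditions: large balls; a thin shell
  around the unit sphere against a small ball at the origin; and small balls against a thin shell,
  where the average of the indicator of \<open>B(0, \<delta>)\<close> is of order \<open>\<delta>\<^bsup>d-1\<^esup>\<close> because the unit sphere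
  centred at a point of the shell meets \<open>B(0, \<delta>)\<close> in a cap of that area.\<close>

section \<open>Shells around the unit sphere\<close>

lemma power_diff_le_mult_power:
  fixes x y :: real
  assumes "0 \<le> y" "y \<le> x"
  shows "x ^ n - y ^ n \<le> real n * (x - y) * x ^ (n - 1)"
proof -
  have "y ^ (n - Suc i) * x ^ i \<le> x ^ (n - 1)" if "i < n" for i
  proof -
    have "y ^ (n - Suc i) * x ^ i \<le> x ^ (n - Suc i) * x ^ i"
      using assms by (intro mult_right_mono power_mono) auto
    also have "\<dots> = x ^ (n - 1)" using that by (simp flip: power_add)
    finally show ?thesis .
  qed
  then have "(\<Sum>i<n. y ^ (n - Suc i) * x ^ i) \<le> real n * x ^ (n - 1)"
    using sum_mono[of "{..<n}" "\<lambda>i. y ^ (n - Suc i) * x ^ i" "\<lambda>_. x ^ (n - 1)"] by simp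
  then have "(x - y) * (\<Sum>i<n. y ^ (n - Suc i) * x ^ i) \<le> (x - y) * (real n * x ^ (n - 1))"
    using assms by (intro mult_left_mono) auto
  then show ?thesis by (simp add: power_diff_sumr2 mult_ac)
qed

definition unit_shell :: "real \<Rightarrow> 'a::real_normed_vector set" where
  "unit_shell t = {x. \<bar>norm x - 1\<bar> < t}"

lemma unit_shell_eq: "unit_shell t = ball 0 (1 + t) - cball 0 (1 - t)"
  by (auto simp: unit_shell_def)

lemma sets_unit_shell [measurable]: "unit_shell t \<in> sets borel"
  by (simp add: unit_shell_eq)

lemma unit_shell_subset_ball: "unit_shell t \<subseteq> ball 0 (1 + t)"
  by (auto simp: unit_shell_def)

lemma sphere_subset_unit_shell:
  fixes x :: "'a::real_normed_vector"
  assumes "norm x < t"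
  shows "sphere x 1 \<subseteq> unit_shell t"
proof
  fix z assume "z \<in> sphere x 1"
  then have "\<bar>norm z - 1\<bar> \<le> norm (z - (z - x))"
    using norm_triangle_ineq3[of z "z - x"] by (simp add: dist_norm norm_minus_commute)
  then show "z \<in> unit_shell t" using assms by (simp add: unit_shell_def)
qed

lemma emeasure_unit_shell:
  assumes "0 < t" "t \<le> 1"
  shows "emeasure lborel (unit_shell t :: 'a::euclidean_space set)
    = ennreal (unit_ball_vol DIM('a) * ((1 + t) ^ DIM('a) - (1 - t) ^ DIM('a)))"
proof -
  have "emeasure lborel (unit_shell t :: 'a set)
      = emeasure lborel (ball (0::'a) (1 + t)) - emeasure lborel (cball (0::'a) (1 - t))"
    unfolding unit_shell_eq using assms
    by (intro emeasure_Diff) (auto simp: emeasure_cball)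
  also have "\<dots> = ennreal (unit_ball_vol DIM('a) * ((1 + t) ^ DIM('a) - (1 - t) ^ DIM('a)))"
    using assms by (simp add: emeasure_ball emeasure_cball ennreal_minus[symmetric]
        right_diff_distrib power_mono)
  finally show ?thesis .
qed

lemma unit_shell_measure_bounds:
  assumes "0 < t" "t \<le> 1"
  shows "unit_ball_vol DIM('a) * t \<le> measure lborel (unit_shell t :: 'a::euclidean_space set)"
    and "emeasure lborel (unit_shell t :: 'a set) \<le> ennreal (DIM('a) * 2 ^ DIM('a) * unit_ball_vol DIM('a) * t)"
proof -
  let ?d = "DIM('a)" and ?w = "unit_ball_vol DIM('a)"
  have "1 + real ?d * t \<le> (1 + t) ^ ?d" using assms by (intro Bernoulli_inequality) simp
  moreover have "(1 - t) ^ ?d \<le> 1" using assms by (intro power_le_one) auto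
  moreover have "t \<le> real ?d * t" using assms by simp
  ultimately have "?w * t \<le> ?w * ((1 + t) ^ ?d - (1 - t) ^ ?d)"
    by (intro mult_left_mono) simp_all
  then show "?w * t \<le> measure lborel (unit_shell t :: 'a set)"
    using assms by (simp add: measure_def emeasure_unit_shell)
  have "(1 + t) ^ ?d - (1 - t) ^ ?d \<le> real ?d * (2 * t) * (1 + t) ^ (?d - 1)"
    using power_diff_le_mult_power[of "1 - t" "1 + t" ?d] assms by simp
  also have "\<dots> \<le> real ?d * (2 * t) * 2 ^ (?d - 1)"
    using assms by (intro mult_left_mono power_mono) auto
  also have "\<dots> = real ?d * 2 ^ ?d * t"
    by (simp add: power_eq_if[of 2 ?d])
  finally show "emeasure lborel (unit_shell t :: 'a set) \<le> ennreal (?d * 2 ^ ?d * ?w * t)"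
    using assms by (simp add: emeasure_unit_shell mult_left_mono mult_ac)
qed

section \<open>Indicator functions in \<open>L\<^sup>p\<close>\<close>

lemma one_divide_ennreal_le_one: "1 \<le> p \<Longrightarrow> 1 / p \<le> (1 :: ennreal)"
  by (metis divide_le_posI_ennreal mult.right_neutral not_gr_zero not_one_le_zero)

lemma one_divide_ennreal_eq: "1 \<le> p \<Longrightarrow> 1 / p = ennreal (enn2real (1 / p))"
  using one_divide_ennreal_le_one[of p] ennreal_enn2real[of "1 / p"] le_less_trans[of "1 / p" 1 top]
  by simp

lemma enn2real_one_divide_le_one: "1 \<le> p \<Longrightarrow> enn2real (1 / p) \<le> 1"
  using one_divide_ennreal_le_one[of p] enn2real_mono[of "1 / p" 1] by simp

lemma Lp_norm_indicator_le:
  fixes S :: "(real ^ 'n::finite) set"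
  assumes S: "S \<in> sets lborel" "emeasure lborel S < \<infinity>" and p: "1 \<le> p"
  shows "Lp_norm p (indicator S) \<le> ennreal (measure lborel S powr enn2real (1 / p))"
proof (cases "p = \<infinity>")
  case True
  have "esssup lborel (\<lambda>x. ennreal \<bar>indicator S x :: real\<bar>) \<le> (if measure lborel S = 0 then 0 else 1)"
  proof (rule esssup_I)
    show "AE x in lborel. ennreal \<bar>indicator S x :: real\<bar> \<le> (if measure lborel S = 0 then 0 else 1)"
    proof (cases "measure lborel S = 0")
      case True
      then have "S \<in> null_sets lborel"
        using S by (simp add: null_sets_def emeasure_eq_ennreal_measure)
      then have "AE x in lborel. x \<notin> S" by (rule AE_not_in)
      then show ?thesis by eventually_elim (simp add: True)
    qed (simp add: indicator_def)
  qed (use S in simp)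
  then show ?thesis
    using True by (cases "measure lborel S = 0") (simp_all add: Lp_norm_def)
next
  case False
  define r where "r = enn2real p"
  have r: "p = ennreal r" "1 \<le> r"
    using False enn2real_mono[OF p] by (simp_all add: r_def less_top)
  have "(\<integral>\<^sup>+ x. ennreal (\<bar>indicator S x :: real\<bar> powr enn2real p) \<partial>lborel)
      = (\<integral>\<^sup>+ x. indicator S x \<partial>lborel)"
    using r by (intro nn_integral_cong) (simp add: indicator_def)
  also have "\<dots> = emeasure lborel S"
    using S by simp
  moreover have "enn2real (1 / p) = 1 / r"
    using r divide_ennreal[of 1 r] by simp
  ultimately show ?thesis
    using False S r by (simp add: Lp_norm_def Let_def measure_def)
qed

lemma of_nat_divide_ennreal_eq:
  fixes p :: ennreal
  assumes "1 \<le> p"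
  shows "of_nat n / p = ennreal (real n * enn2real (1 / p))"
proof -
  have "of_nat n / p = of_nat n * (1 / p)" by (simp add: ennreal_times_divide)
  also have "\<dots> = ennreal (real n * enn2real (1 / p))"
    by (subst one_divide_ennreal_eq[OF assms]) (simp add: ennreal_of_nat_eq_real_of_nat ennreal_mult)
  finally show ?thesis .
qed

section \<open>Lower bounds for spherical averages of indicators\<close>

lemma sph_avg_indicator_ge:
  fixes A K :: "(real ^ 'n::finite) set"
  assumes A: "A \<in> sets borel" and K: "K \<in> sets lborel" "K \<subseteq> cball 0 1"
    and inA: "\<And>y. y \<in> K \<Longrightarrow> x - y /\<^sub>R norm y \<in> A"
  shows "of_nat CARD('n) * emeasure lborel K \<le> sph_avg (indicator A) x"
proof -
  have "(\<lambda>y::real ^ 'n. ennreal (indicator A (x - y) :: real)) \<in> borel_measurable borel"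
    using A by measurable
  then have "sph_avg (indicator A) x = of_nat CARD('n) *
      (\<integral>\<^sup>+ y. ennreal (indicator A (x - y /\<^sub>R norm y)) * indicator (cball 0 1) y \<partial>lborel)"
    unfolding sph_avg_def sphere_surface_def
    by (simp add: nn_integral_scale_measure nn_integral_distr measurable_restrict_space1
        nn_integral_restrict_space)
  moreover have "emeasure lborel K = (\<integral>\<^sup>+ y. indicator K y \<partial>lborel)"
    using K by simp
  moreover have "\<dots> \<le> (\<integral>\<^sup>+ y. ennreal (indicator A (x - y /\<^sub>R norm y)) * indicator (cball 0 1) y \<partial>lborel)"
    using K inA by (intro nn_integral_mono) (auto simp: indicator_def)
  ultimately show ?thesis by (simp add: mult_left_mono)
qed

lemma sph_avg_indicator_ge_sphere:
  fixes A :: "(real ^ 'n::finite) set"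
  assumes "A \<in> sets borel" "sphere x 1 \<subseteq> A"
  shows "ennreal (CARD('n) * unit_ball_vol CARD('n)) \<le> sph_avg (indicator A) x"
proof -
  have "emeasure lborel (cball (0::real ^ 'n) 1 - {0}) = ennreal (unit_ball_vol CARD('n))"
    by (subst emeasure_Diff_null_set) (auto simp: emeasure_cball)
  moreover have "of_nat CARD('n) * emeasure lborel (cball (0::real ^ 'n) 1 - {0}) \<le> sph_avg (indicator A) x"
    using assms by (intro sph_avg_indicator_ge) (auto simp: dist_norm)
  ultimately show ?thesis by (simp add: ennreal_mult ennreal_of_nat_eq_real_of_nat)
qed

lemma dist_normalize_le:
  fixes y e :: "'a::real_normed_vector"
  assumes e: "norm e = 1" and "0 \<le> t" "y \<noteq> 0"
  shows "dist (y /\<^sub>R norm y) e \<le> 2 * dist y (t *\<^sub>R e) / norm y"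
proof -
  have "y /\<^sub>R norm y - e = (y - norm y *\<^sub>R e) /\<^sub>R norm y"
    using assms by (simp add: algebra_simps)
  then have eq: "dist (y /\<^sub>R norm y) e = norm (y - norm y *\<^sub>R e) / norm y"
    by (simp add: dist_norm divide_inverse_commute)
  have "norm (t *\<^sub>R e - norm y *\<^sub>R e) = \<bar>t - norm y\<bar>"
    using e by (simp flip: scaleR_diff_left)
  then have "norm (y - norm y *\<^sub>R e) \<le> dist y (t *\<^sub>R e) + \<bar>t - norm y\<bar>"
    using norm_triangle_ineq[of "y - t *\<^sub>R e" "t *\<^sub>R e - norm y *\<^sub>R e"]
    by (simp add: dist_norm)
  also have "\<bar>t - norm y\<bar> \<le> dist y (t *\<^sub>R e)"
    using norm_triangle_ineq3[of y "t *\<^sub>R e"] e \<open>0 \<le> t\<close> by (simp add: dist_norm abs_minus_commute)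
  finally show ?thesis
    unfolding eq by (simp add: divide_right_mono)
qed

lemma ball_on_unit_ray_in_cone:
  fixes e :: "'a::real_normed_vector"
  assumes e: "norm e = 1" and y: "dist y (t *\<^sub>R e) < s"
    and t: "1 / 2 + s \<le> t" "t + s \<le> 1" and s: "0 < s" "4 * s < r"
  shows "y \<noteq> 0 \<and> norm y \<le> 1 \<and> dist (y /\<^sub>R norm y) e < r"
proof -
  have "\<bar>norm y - t\<bar> < s"
    using y e t s norm_triangle_ineq3[of y "t *\<^sub>R e"] by (simp add: dist_norm)
  then have y_norm: "1 / 2 \<le> norm y" "norm y \<le> 1"
    using t by linarith+
  then have "y \<noteq> 0" by auto
  then have "dist (y /\<^sub>R norm y) e \<le> 2 * dist y (t *\<^sub>R e) / norm y"
    using e t s by (intro dist_normalize_le) auto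
  also have "\<dots> \<le> 2 * s / (1 / 2)"
    using y y_norm s by (intro frac_le) auto
  finally show ?thesis
    using y_norm \<open>y \<noteq> 0\<close> s by simp
qed

lemma disjoint_family_balls_on_unit_ray:
  fixes e :: "'a::real_normed_vector"
  assumes "norm e = 1" "0 < s"
  shows "disjoint_family (\<lambda>k::nat. ball ((a + 2 * real k * s) *\<^sub>R e) s)"
  unfolding disjoint_family_on_def
proof (intro ballI impI)
  fix k l :: nat assume "k \<noteq> l"
  then have "s + s \<le> 2 * s * \<bar>real k - real l\<bar>"
    using \<open>0 < s\<close> by (simp add: of_nat_diff_real)
  also have "\<dots> = dist ((a + 2 * real k * s) *\<^sub>R e) ((a + 2 * real l * s) *\<^sub>R e)"
  proof -
    have "(a + 2 * real k * s) - (a + 2 * real l * s) = 2 * s * (real k - real l)"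
      by (simp add: algebra_simps)
    then show ?thesis
      using assms by (simp add: dist_norm abs_mult flip: scaleR_diff_left)
  qed
  finally show "ball ((a + 2 * real k * s) *\<^sub>R e) s \<inter> ball ((a + 2 * real l * s) *\<^sub>R e) s = {}"
    by (rule disjoint_ballI)
qed

text \<open>The cone over the cap of radius \<open>r\<close> around \<open>e\<close> contains a chain of about \<open>1 / (2 r)\<close>
  disjoint balls of radius \<open>r / 8\<close> strung along the segment from \<open>e / 2\<close> to \<open>e\<close>, of total
  volume of order \<open>r\<^bsup>d-1\<^esup>\<close>.\<close>

lemma cone_over_cap_measure_ge:
  fixes e :: "'a::euclidean_space"
  assumes e: "norm e = 1" and r: "0 < r" "r \<le> 1"
  obtains K where "K \<in> sets lborel" "K \<subseteq> cball 0 1"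
    "\<And>y. y \<in> K \<Longrightarrow> y \<noteq> 0 \<and> dist (y /\<^sub>R norm y) e < r"
    "ennreal (unit_ball_vol DIM('a) / (2 * 8 ^ DIM('a)) * r ^ (DIM('a) - 1)) \<le> emeasure lborel K"
proof -
  define s where "s = r / 8"
  define N where "N = nat \<lceil>1 / (2 * r)\<rceil>"
  define B where "B k = ball ((1 / 2 + s + 2 * real k * s) *\<^sub>R e) s" for k
  have s: "0 < s" using r by (simp add: s_def)
  have "real N = of_int \<lceil>1 / (2 * r)\<rceil>" using r by (simp add: N_def)
  then have "1 / (2 * r) \<le> real N" "real N \<le> 1 / (2 * r) + 1" by linarith+
  then have N: "1 / (2 * r) \<le> real N" "real N * r \<le> 3 / 2"
    using r by (auto simp: field_simps)
  have in_cone: "y \<noteq> 0 \<and> norm y \<le> 1 \<and> dist (y /\<^sub>R norm y) e < r" if "k < N" "y \<in> B k" for k y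
  proof (rule ball_on_unit_ray_in_cone[OF e])
    have "(real k + 1) * r \<le> real N * r" using that(1) r by (intro mult_right_mono) auto
    then show "1 / 2 + s + 2 * real k * s + s \<le> 1" using N by (simp add: s_def field_simps)
  qed (use that s in \<open>auto simp: B_def dist_commute s_def\<close>)
  have "emeasure lborel (\<Union>k<N. B k) = (\<Sum>k<N. emeasure lborel (B k))"
    using disjoint_family_balls_on_unit_ray[OF e s, of "1 / 2 + s"]
    by (intro sum_emeasure[symmetric]) (auto simp: B_def disjoint_family_on_def)
  also have "\<dots> = ennreal (real N * (unit_ball_vol DIM('a) * s ^ DIM('a)))"
    using s by (simp add: B_def emeasure_ball ennreal_of_nat_eq_real_of_nat ennreal_mult)
  finally have measure_K: "emeasure lborel (\<Union>k<N. B k) = \<dots>" .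
  have "unit_ball_vol DIM('a) / (2 * 8 ^ DIM('a)) * r ^ (DIM('a) - 1)
      = 1 / (2 * r) * (unit_ball_vol DIM('a) * s ^ DIM('a))"
    using r by (simp add: s_def power_divide power_eq_if[of r] field_simps)
  also have "\<dots> \<le> real N * (unit_ball_vol DIM('a) * s ^ DIM('a))"
    using N s by (intro mult_right_mono) auto
  finally have "ennreal (unit_ball_vol DIM('a) / (2 * 8 ^ DIM('a)) * r ^ (DIM('a) - 1))
      \<le> emeasure lborel (\<Union>k<N. B k)"
    unfolding measure_K by (rule ennreal_leI)
  moreover have "(\<Union>k<N. B k) \<in> sets lborel" by (auto simp: B_def)
  ultimately show ?thesis
    using in_cone by (intro that[of "\<Union>k<N. B k"]) auto
qed

lemma sph_avg_indicator_small_ball_ge: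
  obtains \<kappa> :: real where "0 < \<kappa>"
    "\<And>\<delta> x :: real ^ 'n::finite. 0 < \<delta> \<Longrightarrow> \<delta> \<le> 1 \<Longrightarrow> x \<in> unit_shell (\<delta> / 4) \<Longrightarrow>
       ennreal (\<kappa> * \<delta> powr (real CARD('n) - 1)) \<le> sph_avg (indicator (ball 0 \<delta>)) x"
proof
  let ?d = "CARD('n)" and ?w = "unit_ball_vol CARD('n)"
  define \<kappa> where "\<kappa> = ?d * (?w / (2 * 8 ^ ?d)) / 2 ^ (?d - 1)"
  show "0 < \<kappa>" by (simp add: \<kappa>_def)
  fix \<delta> and x :: "real ^ 'n"
  assume \<delta>: "0 < \<delta>" "\<delta> \<le> 1" and x: "x \<in> unit_shell (\<delta> / 4)"
  define e where "e = x /\<^sub>R norm x"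
  have "x \<noteq> 0" using x \<delta> by (auto simp: unit_shell_def)
  then have "x - e = (norm x - 1) *\<^sub>R e"
    by (simp add: e_def algebra_simps)
  moreover have "norm e = 1" using \<open>x \<noteq> 0\<close> by (simp add: e_def)
  ultimately have e: "norm e = 1" "dist x e = \<bar>norm x - 1\<bar>"
    by (simp_all add: dist_norm del: scaleR_diff_left)
  txt \<open>Directions within \<open>\<delta> / 2\<close> of \<open>x / |x|\<close> are sent into \<open>B(0, \<delta>)\<close> by \<open>u \<mapsto> x - u\<close>.\<close>
  obtain K where K: "K \<in> sets lborel" "K \<subseteq> cball 0 1"
    and cone: "\<And>y. y \<in> K \<Longrightarrow> y \<noteq> 0 \<and> dist (y /\<^sub>R norm y) e < \<delta> / 2"
    and measure_K: "ennreal (?w / (2 * 8 ^ ?d) * (\<delta> / 2) ^ (?d - 1)) \<le> emeasure lborel K"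
    using cone_over_cap_measure_ge[OF e(1), of "\<delta> / 2"] \<delta> by auto
  have "ennreal (\<kappa> * \<delta> powr (real ?d - 1)) = of_nat ?d * ennreal (?w / (2 * 8 ^ ?d) * (\<delta> / 2) ^ (?d - 1))"
    using \<delta> by (simp add: \<kappa>_def powr_realpow[symmetric] power_divide ennreal_of_nat_eq_real_of_nat
        ennreal_mult[symmetric] of_nat_diff)
  also have "\<dots> \<le> of_nat ?d * emeasure lborel K"
    using measure_K by (rule mult_left_mono) simp
  also have "\<dots> \<le> sph_avg (indicator (ball 0 \<delta>)) x"
  proof (rule sph_avg_indicator_ge[OF _ K])
    fix y assume "y \<in> K"
    have "dist x (y /\<^sub>R norm y) \<le> dist x e + dist (y /\<^sub>R norm y) e"
      by (rule dist_triangle2)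
    then have "dist x (y /\<^sub>R norm y) < \<delta> / 4 + \<delta> / 2"
      using cone[OF \<open>y \<in> K\<close>] e(2) x by (simp add: unit_shell_def)
    then show "x - y /\<^sub>R norm y \<in> ball 0 \<delta>" using \<delta> by (simp add: dist_norm norm_minus_commute)
  qed simp
  finally show "ennreal (\<kappa> * \<delta> powr (real ?d - 1)) \<le> sph_avg (indicator (ball 0 \<delta>)) x" .
qed

section \<open>The scaling argument\<close>

lemma exponent_le_of_powr_bound:
  fixes A B \<alpha> \<beta> \<delta>\<^sub>0 :: real
  assumes A: "0 < A" and \<delta>\<^sub>0: "0 < \<delta>\<^sub>0"
    and bound: "\<And>\<delta>. 0 < \<delta> \<Longrightarrow> \<delta> \<le> \<delta>\<^sub>0 \<Longrightarrow> A * \<delta> powr \<alpha> \<le> B * \<delta> powr \<beta>"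
  shows "\<beta> \<le> \<alpha>"
proof (rule ccontr)
  assume "\<not> \<beta> \<le> \<alpha>"
  then have \<gamma>: "0 < \<beta> - \<alpha>" by simp
  have "0 < A * \<delta>\<^sub>0 powr \<alpha>" using A \<delta>\<^sub>0 by simp
  then have B: "0 < B" using bound[OF \<delta>\<^sub>0 order_refl] \<delta>\<^sub>0
    by (smt (verit) mult_nonpos_nonneg powr_ge_zero)
  define \<delta> where "\<delta> = min \<delta>\<^sub>0 ((A / (2 * B)) powr (1 / (\<beta> - \<alpha>)))"
  have \<delta>: "0 < \<delta>" "\<delta> \<le> \<delta>\<^sub>0" using A B \<delta>\<^sub>0 by (simp_all add: \<delta>_def)
  have "A * \<delta> powr \<alpha> \<le> (B * \<delta> powr (\<beta> - \<alpha>)) * \<delta> powr \<alpha>"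
    using bound[OF \<delta>] \<delta> by (simp add: mult.assoc flip: powr_add)
  then have "A \<le> B * \<delta> powr (\<beta> - \<alpha>)" using \<delta> by simp
  also have "\<dots> \<le> B * ((A / (2 * B)) powr (1 / (\<beta> - \<alpha>))) powr (\<beta> - \<alpha>)"
    using \<delta> \<gamma> B by (intro mult_left_mono powr_mono2) (auto simp: \<delta>_def)
  also have "\<dots> = A / 2" using A B \<gamma> by (simp add: powr_powr)
  finally show False using A by simp
qed

lemma LambdaG_indicator_ge:
  fixes F G H :: "(real ^ 'n::finite) set"
  assumes H: "H \<in> sets lborel" and "0 \<le> a" "0 \<le> b"
    and "\<And>x. x \<in> H \<Longrightarrow> ennreal a \<le> sph_avg (indicator F) x"
    and "\<And>x. x \<in> H \<Longrightarrow> ennreal b \<le> sph_avg (indicator G) x"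
  shows "ennreal (a * b) * emeasure lborel H \<le> LambdaG (indicator F) (indicator G) (indicator H)"
proof -
  have "ennreal (a * b) * emeasure lborel H = (\<integral>\<^sup>+ x. ennreal (a * b) * indicator H x \<partial>lborel)"
    using H by (simp add: nn_integral_cmult_indicator)
  also have "\<dots> \<le> LambdaG (indicator F) (indicator G) (indicator H)"
    unfolding LambdaG_def using assms
    by (intro nn_integral_mono) (auto simp: indicator_def ennreal_mult intro: mult_mono)
  finally show ?thesis .
qed

context
  fixes p1 p2 p3 :: ennreal and C :: real
  assumes p_range: "1 \<le> p1" "1 \<le> p2" "1 \<le> p3"
    and bound: "\<And>f g h :: real ^ 'n::finite \<Rightarrow> real.
        f \<in> borel_measurable lborel \<Longrightarrow> g \<in> borel_measurable lborel \<Longrightarrow>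
        h \<in> borel_measurable lborel \<Longrightarrow>
        (\<forall>x. 0 \<le> f x) \<Longrightarrow> (\<forall>x. 0 \<le> g x) \<Longrightarrow> (\<forall>x. 0 \<le> h x) \<Longrightarrow>
        LambdaG f g h \<le> ennreal C * Lp_norm p1 f * Lp_norm p2 g * Lp_norm p3 h"
begin

lemma LambdaG_indicator_bound:
  fixes F G H :: "(real ^ 'n) set"
  assumes F: "F \<in> sets lborel" "emeasure lborel F < \<infinity>"
    and G: "G \<in> sets lborel" "emeasure lborel G < \<infinity>"
    and H: "H \<in> sets lborel" "emeasure lborel H < \<infinity>" "0 < measure lborel H"
    and ab: "0 \<le> a" "0 \<le> b"
    and avg: "\<And>x. x \<in> H \<Longrightarrow> ennreal a \<le> sph_avg (indicator F) x"
      "\<And>x. x \<in> H \<Longrightarrow> ennreal b \<le> sph_avg (indicator G) x"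
  shows "a * b * measure lborel H powr (1 - enn2real (1 / p3))
    \<le> max C 0 * measure lborel F powr enn2real (1 / p1) * measure lborel G powr enn2real (1 / p2)"
proof -
  let ?F = "measure lborel F powr enn2real (1 / p1)" and ?G = "measure lborel G powr enn2real (1 / p2)"
    and ?H = "measure lborel H powr enn2real (1 / p3)"
  have "ennreal (a * b * measure lborel H) = ennreal (a * b) * emeasure lborel H"
    using H ab by (simp add: emeasure_eq_ennreal_measure ennreal_mult)
  also have "\<dots> \<le> LambdaG (indicator F) (indicator G) (indicator H)"
    using H(1) ab avg by (rule LambdaG_indicator_ge)
  also have "\<dots> \<le> ennreal C * Lp_norm p1 (indicator F) * Lp_norm p2 (indicator G) * Lp_norm p3 (indicator H)"
    using F G H by (intro bound) auto
  also have "\<dots> \<le> ennreal (max C 0) * ennreal ?F * ennreal ?G * ennreal ?H"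
    using F G H p_range
    by (intro mult_mono Lp_norm_indicator_le) (auto simp: ennreal_max_0)
  also have "\<dots> = ennreal (max C 0 * ?F * ?G * ?H)"
    by (simp add: ennreal_mult)
  finally have bound_H: "a * b * measure lborel H \<le> max C 0 * ?F * ?G * ?H"
    by (simp add: ennreal_le_iff)
  have "(a * b * measure lborel H powr (1 - enn2real (1 / p3))) * ?H
      = a * b * (measure lborel H powr (1 - enn2real (1 / p3)) * ?H)"
    by (simp only: mult.assoc)
  also have "measure lborel H powr (1 - enn2real (1 / p3)) * ?H = measure lborel H"
    using H by (simp flip: powr_add)
  also note bound_H
  finally have "(a * b * measure lborel H powr (1 - enn2real (1 / p3))) * ?H \<le> (max C 0 * ?F * ?G) * ?H" .
  then show ?thesis
    by (rule mult_right_le_imp_le) (use H in simp)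
qed

lemma exponent_inequality_of_scaling:
  fixes F G H :: "real \<Rightarrow> (real ^ 'n) set" and \<alpha> \<beta> \<gamma> \<phi> \<psi> :: real
  assumes \<delta>\<^sub>0: "0 < \<delta>\<^sub>0" and constants: "0 < c\<^sub>a" "0 < c\<^sub>b" "0 < c\<^sub>H" "0 \<le> c\<^sub>F" "0 \<le> c\<^sub>G"
    and F: "\<And>\<delta>. 0 < \<delta> \<Longrightarrow> \<delta> \<le> \<delta>\<^sub>0 \<Longrightarrow>
      F \<delta> \<in> sets lborel \<and> emeasure lborel (F \<delta>) \<le> ennreal (c\<^sub>F * \<delta> powr \<phi>)"
    and G: "\<And>\<delta>. 0 < \<delta> \<Longrightarrow> \<delta> \<le> \<delta>\<^sub>0 \<Longrightarrow>
      G \<delta> \<in> sets lborel \<and> emeasure lborel (G \<delta>) \<le> ennreal (c\<^sub>G * \<delta> powr \<psi>)"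
    and H: "\<And>\<delta>. 0 < \<delta> \<Longrightarrow> \<delta> \<le> \<delta>\<^sub>0 \<Longrightarrow>
      H \<delta> \<in> sets lborel \<and> emeasure lborel (H \<delta>) < \<infinity> \<and> c\<^sub>H * \<delta> powr \<gamma> \<le> measure lborel (H \<delta>)"
    and avg_F: "\<And>\<delta> x. 0 < \<delta> \<Longrightarrow> \<delta> \<le> \<delta>\<^sub>0 \<Longrightarrow> x \<in> H \<delta> \<Longrightarrow>
      ennreal (c\<^sub>a * \<delta> powr \<alpha>) \<le> sph_avg (indicator (F \<delta>)) x"
    and avg_G: "\<And>\<delta> x. 0 < \<delta> \<Longrightarrow> \<delta> \<le> \<delta>\<^sub>0 \<Longrightarrow> x \<in> H \<delta> \<Longrightarrow>
      ennreal (c\<^sub>b * \<delta> powr \<beta>) \<le> sph_avg (indicator (G \<delta>)) x"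
  shows "\<phi> * enn2real (1 / p1) + \<psi> * enn2real (1 / p2) \<le> \<alpha> + \<beta> + \<gamma> * (1 - enn2real (1 / p3))"
proof -
  define q1 q2 q3 where "q1 = enn2real (1 / p1)" and "q2 = enn2real (1 / p2)" and "q3 = enn2real (1 / p3)"
  have q: "0 \<le> q1" "0 \<le> q2" "q3 \<le> 1"
    using enn2real_one_divide_le_one[OF p_range(3)] by (simp_all add: q1_def q2_def q3_def)
  have measure_le: "measure lborel S \<le> c" if "emeasure lborel S \<le> ennreal c" "0 \<le> c" for S and c :: real
    using that by (simp add: measure_def enn2real_leI)
  show ?thesis
    unfolding q1_def[symmetric] q2_def[symmetric] q3_def[symmetric]
  proof (rule exponent_le_of_powr_bound[OF _ \<delta>\<^sub>0])
    show "0 < c\<^sub>a * c\<^sub>b * c\<^sub>H powr (1 - q3)" using constants by simp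
    fix \<delta> :: real assume \<delta>: "0 < \<delta>" "\<delta> \<le> \<delta>\<^sub>0"
    note F = F[OF \<delta>] and G = G[OF \<delta>] and H = H[OF \<delta>]
    have H_pos: "0 < measure lborel (H \<delta>)"
      using H constants \<delta> by (smt (verit) powr_gt_zero mult_pos_pos)
    have "c\<^sub>a * c\<^sub>b * c\<^sub>H powr (1 - q3) * \<delta> powr (\<alpha> + \<beta> + \<gamma> * (1 - q3))
        = c\<^sub>a * \<delta> powr \<alpha> * (c\<^sub>b * \<delta> powr \<beta>) * (c\<^sub>H * \<delta> powr \<gamma>) powr (1 - q3)"
      using constants \<delta> by (simp add: powr_add powr_mult powr_powr mult_ac)
    also have "\<dots> \<le> c\<^sub>a * \<delta> powr \<alpha> * (c\<^sub>b * \<delta> powr \<beta>) * measure lborel (H \<delta>) powr (1 - q3)"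
      using H constants q by (intro mult_left_mono powr_mono2) auto
    also have "\<dots> \<le> max C 0 * measure lborel (F \<delta>) powr q1 * measure lborel (G \<delta>) powr q2"
      unfolding q1_def q2_def q3_def
      using F G H H_pos constants avg_F[OF \<delta>] avg_G[OF \<delta>]
      by (intro LambdaG_indicator_bound) (auto simp: le_less_trans[OF _ ennreal_less_top])
    also have "\<dots> \<le> max C 0 * (c\<^sub>F * \<delta> powr \<phi>) powr q1 * (c\<^sub>G * \<delta> powr \<psi>) powr q2"
      using F G constants q by (intro mult_mono powr_mono2 measure_le) auto
    also have "\<dots> = max C 0 * c\<^sub>F powr q1 * c\<^sub>G powr q2 * \<delta> powr (\<phi> * q1 + \<psi> * q2)"
      using constants \<delta> by (simp add: powr_add powr_mult powr_powr mult_ac)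
    finally show "c\<^sub>a * c\<^sub>b * c\<^sub>H powr (1 - q3) * \<delta> powr (\<alpha> + \<beta> + \<gamma> * (1 - q3))
        \<le> max C 0 * c\<^sub>F powr q1 * c\<^sub>G powr q2 * \<delta> powr (\<phi> * q1 + \<psi> * q2)" .
  qed
qed

lemma exponents_large_balls:
  "1 \<le> enn2real (1 / p1) + enn2real (1 / p2) + enn2real (1 / p3)"
proof -
  let ?d = "real CARD('n)" and ?w = "unit_ball_vol CARD('n)"
  have powr_eq: "\<delta> powr - ?d = (1 / \<delta>) ^ CARD('n)" if "0 < \<delta>" for \<delta> :: real
    using that by (simp add: powr_minus_divide powr_realpow power_one_over)
  have F: "ball 0 (1 / \<delta>) \<in> sets lborel \<and> emeasure lborel (ball (0 :: real ^ 'n) (1 / \<delta>)) \<le> ennreal (?w * \<delta> powr - ?d)"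
    if "0 < \<delta>" "\<delta> \<le> 1 / 2" for \<delta> :: real
    using that by (simp add: emeasure_ball powr_eq)
  have H: "ball 0 (1 / \<delta> - 1) \<in> sets lborel \<and> emeasure lborel (ball (0 :: real ^ 'n) (1 / \<delta> - 1)) < \<infinity>
        \<and> ?w / 2 ^ CARD('n) * \<delta> powr - ?d \<le> measure lborel (ball (0 :: real ^ 'n) (1 / \<delta> - 1))"
    if \<delta>: "0 < \<delta>" "\<delta> \<le> 1 / 2" for \<delta> :: real
  proof -
    have "1 / (2 * \<delta>) \<le> 1 / \<delta> - 1"
      using \<delta> by (simp add: field_simps)
    then have "?w * (1 / (2 * \<delta>)) ^ CARD('n) \<le> ?w * (1 / \<delta> - 1) ^ CARD('n)"
      using \<delta> by (intro mult_left_mono power_mono) auto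
    moreover have "?w / 2 ^ CARD('n) * \<delta> powr - ?d = ?w * (1 / (2 * \<delta>)) ^ CARD('n)"
      using \<delta> by (simp add: powr_eq power_one_over power_mult_distrib)
    moreover have "0 \<le> 1 / \<delta> - 1"
      using \<delta> by (simp add: field_simps)
    ultimately show ?thesis
      by (simp add: emeasure_ball measure_def)
  qed
  have avg: "ennreal (?d * ?w * \<delta> powr 0) \<le> sph_avg (indicator (ball 0 (1 / \<delta>))) x"
    if "0 < \<delta>" "\<delta> \<le> 1 / 2" "x \<in> ball 0 (1 / \<delta> - 1)" for \<delta> :: real and x :: "real ^ 'n"
  proof -
    have "sphere x 1 \<subseteq> ball 0 (1 / \<delta>)"
      using that sphere_subset_unit_shell[of x "1 / \<delta> - 1"] unit_shell_subset_ball[of "1 / \<delta> - 1"] by auto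
    then show ?thesis
      using that sph_avg_indicator_ge_sphere[of "ball 0 (1 / \<delta>)" x] by simp
  qed
  have "- ?d * enn2real (1 / p1) + - ?d * enn2real (1 / p2) \<le> 0 + 0 + - ?d * (1 - enn2real (1 / p3))"
    by (rule exponent_inequality_of_scaling[where \<delta>\<^sub>0 = "1 / 2" and F = "\<lambda>\<delta>. ball 0 (1 / \<delta>)" and G = "\<lambda>\<delta>. ball 0 (1 / \<delta>)"
          and H = "\<lambda>\<delta>. ball 0 (1 / \<delta> - 1)", OF _ _ _ _ _ _ F F H avg avg]) simp_all
  then have "?d * 1 \<le> ?d * (enn2real (1 / p1) + enn2real (1 / p2) + enn2real (1 / p3))"
    by (simp add: algebra_simps)
  then show ?thesis by simp
qed

lemma exponents_thin_shells:
  "enn2real (1 / p1) + enn2real (1 / p2) + real CARD('n) * enn2real (1 / p3) \<le> real CARD('n)"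
proof -
  let ?d = "real CARD('n)" and ?w = "unit_ball_vol CARD('n)"
  have F: "unit_shell \<delta> \<in> sets lborel \<and>
      emeasure lborel (unit_shell \<delta> :: (real ^ 'n) set) \<le> ennreal (?d * 2 ^ CARD('n) * ?w * \<delta> powr 1)"
    if "0 < \<delta>" "\<delta> \<le> 1" for \<delta> :: real
    using that unit_shell_measure_bounds(2)[of \<delta>, where 'a = "real ^ 'n"] by simp
  have H: "ball 0 \<delta> \<in> sets lborel \<and> emeasure lborel (ball (0 :: real ^ 'n) \<delta>) < \<infinity> \<and>
      ?w * \<delta> powr ?d \<le> measure lborel (ball (0 :: real ^ 'n) \<delta>)"
    if "0 < \<delta>" "\<delta> \<le> 1" for \<delta> :: real
    using that by (simp add: emeasure_ball measure_def powr_realpow)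
  have avg: "ennreal (?d * ?w * \<delta> powr 0) \<le> sph_avg (indicator (unit_shell \<delta>)) x"
    if "0 < \<delta>" "\<delta> \<le> 1" "x \<in> ball 0 \<delta>" for \<delta> :: real and x :: "real ^ 'n"
    using that sphere_subset_unit_shell[of x \<delta>] sph_avg_indicator_ge_sphere[of "unit_shell \<delta>" x] by simp
  have "1 * enn2real (1 / p1) + 1 * enn2real (1 / p2) \<le> 0 + 0 + ?d * (1 - enn2real (1 / p3))"
    by (rule exponent_inequality_of_scaling[where \<delta>\<^sub>0 = 1 and F = unit_shell and G = unit_shell
          and H = "\<lambda>\<delta>. ball 0 \<delta>", OF _ _ _ _ _ _ F F H avg avg]) simp_all
  then show ?thesis by (simp add: algebra_simps)
qed

lemma exponents_small_balls_on_shell: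
  "real CARD('n) * enn2real (1 / p1) + real CARD('n) * enn2real (1 / p2) + enn2real (1 / p3)
     \<le> 2 * real CARD('n) - 1"
  "real CARD('n) * enn2real (1 / p1) + enn2real (1 / p3) \<le> real CARD('n)"
  "real CARD('n) * enn2real (1 / p2) + enn2real (1 / p3) \<le> real CARD('n)"
proof -
  let ?d = "real CARD('n)" and ?w = "unit_ball_vol CARD('n)"
  obtain \<kappa> where \<kappa>: "0 < \<kappa>"
    and avg_small: "\<And>\<delta> x :: real ^ 'n. 0 < \<delta> \<Longrightarrow> \<delta> \<le> 1 \<Longrightarrow> x \<in> unit_shell (\<delta> / 4) \<Longrightarrow>
       ennreal (\<kappa> * \<delta> powr (?d - 1)) \<le> sph_avg (indicator (ball 0 \<delta>)) x"
    using sph_avg_indicator_small_ball_ge[where 'n = 'n] by blast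
  have avg_fixed: "ennreal (?d * ?w * \<delta> powr 0) \<le> sph_avg (indicator (ball 0 3)) x"
    if "0 < \<delta>" "\<delta> \<le> 1" "x \<in> unit_shell (\<delta> / 4)" for \<delta> :: real and x :: "real ^ 'n"
  proof -
    have "\<bar>norm x - 1\<bar> < \<delta> / 4" using that(3) by (simp add: unit_shell_def)
    then have "norm x < 2" using that(2) by linarith
    then have "sphere x 1 \<subseteq> ball 0 3"
      using sphere_subset_unit_shell[of x 2] unit_shell_subset_ball[of 2] by auto
    then show ?thesis
      using that sph_avg_indicator_ge_sphere[of "ball 0 3" x] by simp
  qed
  have small: "ball 0 \<delta> \<in> sets lborel \<and> emeasure lborel (ball (0 :: real ^ 'n) \<delta>) \<le> ennreal (?w * \<delta> powr ?d)"
    if "0 < \<delta>" "\<delta> \<le> 1" for \<delta> :: real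
    using that by (simp add: emeasure_ball powr_realpow)
  have fixed: "ball 0 3 \<in> sets lborel \<and> emeasure lborel (ball (0 :: real ^ 'n) 3) \<le> ennreal (?w * 3 ^ CARD('n) * \<delta> powr 0)"
    if "0 < \<delta>" "\<delta> \<le> 1" for \<delta> :: real
    using that by (simp add: emeasure_ball)
  have shell: "unit_shell (\<delta> / 4) \<in> sets lborel \<and> emeasure lborel (unit_shell (\<delta> / 4) :: (real ^ 'n) set) < \<infinity> \<and>
      ?w / 4 * \<delta> powr 1 \<le> measure lborel (unit_shell (\<delta> / 4) :: (real ^ 'n) set)"
    if "0 < \<delta>" "\<delta> \<le> 1" for \<delta> :: real
    using that unit_shell_measure_bounds[of "\<delta> / 4", where 'a = "real ^ 'n"] by (auto intro: le_less_trans[OF _ ennreal_less_top])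
  have "?d * enn2real (1 / p1) + ?d * enn2real (1 / p2) \<le> (?d - 1) + (?d - 1) + 1 * (1 - enn2real (1 / p3))"
    by (rule exponent_inequality_of_scaling[where \<delta>\<^sub>0 = 1 and F = "\<lambda>\<delta>. ball 0 \<delta>" and G = "\<lambda>\<delta>. ball 0 \<delta>"
          and H = "\<lambda>\<delta>. unit_shell (\<delta> / 4)", OF _ _ _ _ _ _ small small shell avg_small avg_small])
      (use \<kappa> in simp_all)
  then show "?d * enn2real (1 / p1) + ?d * enn2real (1 / p2) + enn2real (1 / p3) \<le> 2 * ?d - 1"
    by simp
  have "?d * enn2real (1 / p1) + 0 * enn2real (1 / p2) \<le> (?d - 1) + 0 + 1 * (1 - enn2real (1 / p3))"
    by (rule exponent_inequality_of_scaling[where \<delta>\<^sub>0 = 1 and F = "\<lambda>\<delta>. ball 0 \<delta>" and G = "\<lambda>\<delta>. ball 0 3"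
          and H = "\<lambda>\<delta>. unit_shell (\<delta> / 4)", OF _ _ _ _ _ _ small fixed shell avg_small avg_fixed])
      (use \<kappa> in simp_all)
  then show "?d * enn2real (1 / p1) + enn2real (1 / p3) \<le> ?d"
    by simp
  have "0 * enn2real (1 / p1) + ?d * enn2real (1 / p2) \<le> 0 + (?d - 1) + 1 * (1 - enn2real (1 / p3))"
    by (rule exponent_inequality_of_scaling[where \<delta>\<^sub>0 = 1 and F = "\<lambda>\<delta>. ball 0 3" and G = "\<lambda>\<delta>. ball 0 \<delta>"
          and H = "\<lambda>\<delta>. unit_shell (\<delta> / 4)", OF _ _ _ _ _ _ fixed small shell avg_fixed avg_small])
      (use \<kappa> in simp_all)
  then show "?d * enn2real (1 / p2) + enn2real (1 / p3) \<le> ?d"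
    by simp
qed

lemma exponent_conditions:
  "1 \<le> enn2real (1 / p1) + enn2real (1 / p2) + enn2real (1 / p3) \<and>
   enn2real (1 / p1) + enn2real (1 / p2) + real CARD('n) * enn2real (1 / p3) \<le> real CARD('n) \<and>
   real CARD('n) * enn2real (1 / p1) + real CARD('n) * enn2real (1 / p2) + enn2real (1 / p3)
     \<le> 2 * real CARD('n) - 1 \<and>
   real CARD('n) * enn2real (1 / p1) + enn2real (1 / p3) \<le> real CARD('n) \<and>
   real CARD('n) * enn2real (1 / p2) + enn2real (1 / p3) \<le> real CARD('n)"
  using exponents_large_balls exponents_thin_shells exponents_small_balls_on_shell by blast

end

theorem mainTheorem15:
  fixes p1 p2 p3 :: ennreal and C :: real
  assumes dim: "CARD('n::finite) \<ge> 2"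
    and p_range: "1 \<le> p1" "1 \<le> p2" "1 \<le> p3"
    and bound: "\<And>f g h :: real ^ 'n \<Rightarrow> real.
        f \<in> borel_measurable lborel \<Longrightarrow> g \<in> borel_measurable lborel \<Longrightarrow>
        h \<in> borel_measurable lborel \<Longrightarrow>
        (\<forall>x. 0 \<le> f x) \<Longrightarrow> (\<forall>x. 0 \<le> g x) \<Longrightarrow> (\<forall>x. 0 \<le> h x) \<Longrightarrow>
        LambdaG f g h \<le> ennreal C * Lp_norm p1 f * Lp_norm p2 g * Lp_norm p3 h"
  shows "1 / p1 + 1 / p2 + 1 / p3 \<ge> 1 \<and>
         1 / p1 + 1 / p2 + of_nat CARD('n) / p3 \<le> of_nat CARD('n) \<and>
         of_nat CARD('n) / p1 + of_nat CARD('n) / p2 + 1 / p3 \<le> 2 * of_nat CARD('n) - 1 \<and>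
         of_nat CARD('n) / p1 + 1 / p3 \<le> of_nat CARD('n) \<and>
         of_nat CARD('n) / p2 + 1 / p3 \<le> (of_nat CARD('n) :: ennreal)"
proof -
  define q1 q2 q3 where "q1 = enn2real (1 / p1)" and "q2 = enn2real (1 / p2)" and "q3 = enn2real (1 / p3)"
  have inverse: "1 / p1 = ennreal q1" "1 / p2 = ennreal q2" "1 / p3 = ennreal q3"
    unfolding q1_def q2_def q3_def using p_range by (blast intro: one_divide_ennreal_eq)+
  have scaled: "of_nat CARD('n) / p1 = ennreal (real CARD('n) * q1)"
    "of_nat CARD('n) / p2 = ennreal (real CARD('n) * q2)" "of_nat CARD('n) / p3 = ennreal (real CARD('n) * q3)"
    unfolding q1_def q2_def q3_def using p_range by (blast intro: of_nat_divide_ennreal_eq)+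
  have nonneg: "0 \<le> q1" "0 \<le> q2" "0 \<le> q3"
    by (simp_all add: q1_def q2_def q3_def)
  have d: "(of_nat CARD('n) :: ennreal) = ennreal (real CARD('n))"
    by (simp add: ennreal_of_nat_eq_real_of_nat)
  have twice: "2 * ennreal (real CARD('n)) - 1 = ennreal (2 * real CARD('n) - 1)"
    using ennreal_minus[of 1 "2 * real CARD('n)"] by (simp add: ennreal_mult)
  have "1 \<le> q1 + q2 + q3 \<and> q1 + q2 + real CARD('n) * q3 \<le> real CARD('n) \<and>
      real CARD('n) * q1 + real CARD('n) * q2 + q3 \<le> 2 * real CARD('n) - 1 \<and>
      real CARD('n) * q1 + q3 \<le> real CARD('n) \<and> real CARD('n) * q2 + q3 \<le> real CARD('n)"
    unfolding q1_def q2_def q3_def by (rule exponent_conditions) (fact p_range bound)+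
  then show ?thesis
    unfolding scaled unfolding inverse d twice
    using nonneg by (auto dest: ennreal_leI)
qed

end
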